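(* Let $K$ be a compact line and let $G:K\to\mathbb{R}$ be a regulated function. Then $G$ is the uniform limit of step functions. In particular, $G$ is Borel measurable.
   Context: A compact line is a compact space $K$ whose topology is the order topology of a linear order on $K$; $0_K$ and $1_K$ denote its minimum and maximum, and $0_K<1_K$. A point $x\in(0_K,1_K]$ is left-dense if it has no immediate predecessor; $x\in[0_K,1_K)$ is right-dense if it has no immediate successor. $G:K\to\mathbb{R}$ is regulated if for every left-dense $x$ the limit $\lim_{y\nearrow x}G(y)$ exists, and for every right-dense $x$, $\lim_{y\searrow x}G(y)=G(x)$. A function $S:K\to\mathbb{R}$ is a step function if there are points $0_K=s_0<s_1<\cdots<s_n=1_K$ such that $S$ is constant on each open interval $(s_{k-1},s_k)$, $k=1,\dots,n$. *)

theory Defs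
  imports "HOL-Analysis.Analysis"
begin

text \<open>A compact line is modelled as a type of class linorder_topology
  (topology = order topology) whose universe is compact, with at least two points.\<close>

definition left_dense :: "'a::linorder \<Rightarrow> bool" where
  "left_dense x \<longleftrightarrow> (\<exists>y. y < x) \<and> (\<forall>y. y < x \<longrightarrow> (\<exists>z. y < z \<and> z < x))"

definition right_dense :: "'a::linorder \<Rightarrow> bool" where
  "right_dense x \<longleftrightarrow> (\<exists>y. x < y) \<and> (\<forall>y. x < y \<longrightarrow> (\<exists>z. x < z \<and> z < y))"

definition regulated :: "('a::linorder_topology \<Rightarrow> real) \<Rightarrow> bool" where
  "regulated G \<longleftrightarrow>
     (\<forall>x. left_dense x \<longrightarrow> (\<exists>L. (G \<longlongrightarrow> L) (at_left x))) \<and>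
     (\<forall>x. right_dense x \<longrightarrow> (G \<longlongrightarrow> G x) (at_right x))"

definition step_function :: "('a::linorder \<Rightarrow> real) \<Rightarrow> bool" where
  "step_function S \<longleftrightarrow>
     (\<exists>(s::nat \<Rightarrow> 'a) n. (\<forall>x. s 0 \<le> x) \<and> (\<forall>x. x \<le> s n) \<and>
        (\<forall>k<n. s k < s (Suc k)) \<and>
        (\<forall>k<n. \<exists>c. \<forall>x. s k < x \<and> x < s (Suc k) \<longrightarrow> S x = c))"

end

theory Submission
  imports Defs
begin

(* A regulated G is, up to e, constant on a small left neighbourhood (l, x) of each point x
   (by the left limit, or vacuously if x has an immediate predecessor) and equal to G x on a
   small right neighbourhood (x, r) (by right continuity, or vacuously if x has an immediate
   successor). Compactness selects finitely many of the neighbourhoods (l, r); their centres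
   and endpoints form a finite set F, and every gap between consecutive points of F lies inside
   one of the halves (l, x) or (x, r), so G is e-close to a step function that jumps only on F.
   Step functions are Borel, their preimages being a finite set plus finitely many open
   intervals, and Borel measurability passes to pointwise limits. *)

definition adjacent_in :: "'a::linorder set \<Rightarrow> 'a \<Rightarrow> 'a \<Rightarrow> bool" where
  "adjacent_in F a b \<longleftrightarrow> a \<in> F \<and> b \<in> F \<and> a < b \<and> {a<..<b} \<inter> F = {}"

lemma adjacent_in_between:
  assumes "adjacent_in F a b" "y \<in> {a<..<b}" "p \<in> F" "q \<in> F" "p < y" "y < q"
  shows "p \<le> a \<and> b \<le> q"
proof -
  have "p \<notin> {a<..<b}" "q \<notin> {a<..<b}"
    using assms(1,3,4) unfolding adjacent_in_def by auto
  moreover have "p < b" "a < q"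
    using assms(2,5,6) by auto
  ultimately show ?thesis
    by (auto simp: not_less[symmetric])
qed

lemma adjacent_in_unique:
  assumes "adjacent_in F a b" "adjacent_in F a' b'" "x \<in> {a<..<b}" "x \<in> {a'<..<b'}"
  shows "a = a' \<and> b = b'"
proof -
  have "a \<in> F" "b \<in> F" "a' \<in> F" "b' \<in> F"
    using assms(1,2) unfolding adjacent_in_def by auto
  then have "a' \<le> a \<and> b \<le> b'" "a \<le> a' \<and> b' \<le> b"
    using adjacent_in_between[OF assms(1,3)] adjacent_in_between[OF assms(2,4)] assms(3,4)
    by auto
  then show ?thesis
    by auto
qed

lemma adjacent_in_Max_Min:
  fixes F :: "'a::linorder set"
  assumes "finite F" "a \<in> F" "b \<in> F" "x \<in> {a<..<b}" "x \<notin> F"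
  defines "lo \<equiv> Max {z\<in>F. z < x}" and "hi \<equiv> Min {z\<in>F. x < z}"
  shows "adjacent_in F lo hi \<and> x \<in> {lo<..<hi}"
proof -
  have lo: "lo \<in> {z\<in>F. z < x}"
    unfolding lo_def using assms(1,2,4) by (intro Max_in) auto
  have hi: "hi \<in> {z\<in>F. x < z}"
    unfolding hi_def using assms(1,3,4) by (intro Min_in) auto
  have "z \<notin> F" if "lo < z" "z < hi" for z
  proof
    assume "z \<in> F"
    moreover have "z \<noteq> x" using assms(5) \<open>z \<in> F\<close> by blast
    ultimately have "z \<le> lo \<or> hi \<le> z"
      unfolding lo_def hi_def using assms(1) by (auto simp: neq_iff intro: Max_ge Min_le)
    with that show False by auto
  qed
  then show ?thesis
    using lo hi unfolding adjacent_in_def by auto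
qed

lemma step_functionI_finite:
  fixes S :: "'a::linorder \<Rightarrow> real"
  assumes F: "finite F" "m \<in> F" "M \<in> F" and bounds: "\<And>x. m \<le> x" "\<And>x. x \<le> M"
    and const: "\<And>a b. adjacent_in F a b \<Longrightarrow> \<exists>c. \<forall>x\<in>{a<..<b}. S x = c"
  shows "step_function S"
proof -
  define xs where "xs = sorted_list_of_set F"
  define n where "n = length xs - 1"
  have set_xs: "set xs = F" and strict: "sorted_wrt (<) xs" and sorted: "sorted xs"
    using F(1) by (simp_all add: xs_def)
  have len: "k < length xs \<longleftrightarrow> k \<le> n" for k
  proof -
    have "length xs > 0"
      using F(2) set_xs by auto
    then show ?thesis
      unfolding n_def by arith
  qed
  have mono: "xs ! i \<le> xs ! j" if "i \<le> j" "j \<le> n" for i j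
    using sorted_nth_mono[OF sorted that(1)] that(2) len by simp
  have index: "\<exists>j\<le>n. xs ! j = z" if "z \<in> F" for z
  proof -
    have "z \<in> set xs"
      using that set_xs by simp
    then obtain j where "j < length xs" "xs ! j = z"
      by (auto simp: in_set_conv_nth)
    then show ?thesis
      using len by blast
  qed
  obtain i j where "i \<le> n" "xs ! i = m" "j \<le> n" "xs ! j = M"
    using index F(2,3) by blast
  then have first: "xs ! 0 \<le> x" and last: "x \<le> xs ! n" for x
    using mono[of 0 i] mono[of j n] bounds[of x] by (auto intro: order_trans)
  have member: "xs ! k \<in> F" if "k \<le> n" for k
    by (metis len nth_mem set_xs that)
  have adjacent: "adjacent_in F (xs ! k) (xs ! Suc k)" if "k < n" for k
  proof -
    have "xs ! j \<notin> {xs ! k<..<xs ! Suc k}" if "j \<le> n" for j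
    proof (cases "j \<le> k")
      case True
      then have "xs ! j \<le> xs ! k"
        using mono \<open>k < n\<close> by simp
      then show ?thesis
        by auto
    next
      case False
      then have "xs ! Suc k \<le> xs ! j"
        using mono that by simp
      then show ?thesis
        by auto
    qed
    then have "{xs ! k<..<xs ! Suc k} \<inter> F = {}"
      using index by fastforce
    moreover have "xs ! k < xs ! Suc k"
      using sorted_wrt_nth_less[OF strict] len that by simp
    ultimately show ?thesis
      unfolding adjacent_in_def using member that by simp
  qed
  have "\<exists>c. \<forall>x. xs ! k < x \<and> x < xs ! Suc k \<longrightarrow> S x = c" if "k < n" for k
    using const[OF adjacent[OF that]] by auto
  with first last adjacent show ?thesis
    unfolding step_function_def
    by (intro exI[of _ "(!) xs"] exI[of _ n]) (auto simp: adjacent_in_def)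
qed

lemma step_function_approx_gaps:
  fixes f :: "'a::linorder \<Rightarrow> real"
  assumes F: "finite F" "m \<in> F" "M \<in> F" and bounds: "\<And>x. m \<le> x" "\<And>x. x \<le> M" and "e > 0"
    and near: "\<And>a b. adjacent_in F a b \<Longrightarrow> \<exists>c. \<forall>z\<in>{a<..<b}. dist (f z) c < e"
  shows "\<exists>S. step_function S \<and> (\<forall>x. dist (S x) (f x) < e)"
proof -
  obtain c where c: "\<And>a b z. adjacent_in F a b \<Longrightarrow> z \<in> {a<..<b} \<Longrightarrow> dist (f z) (c a b) < e"
    using near by metis
  define S where "S x = (if x \<in> F then f x else c (Max {z\<in>F. z < x}) (Min {z\<in>F. x < z}))" for x
  have gap: "adjacent_in F (Max {z\<in>F. z < x}) (Min {z\<in>F. x < z})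
      \<and> x \<in> {Max {z\<in>F. z < x}<..<Min {z\<in>F. x < z}}" if "x \<notin> F" for x
  proof (rule adjacent_in_Max_Min[OF F])
    have "m \<noteq> x" "x \<noteq> M"
      using F that by auto
    then show "x \<in> {m<..<M}"
      using bounds[of x] by (simp add: le_neq_trans)
  qed fact
  have on_gap: "S x = c a b" if "adjacent_in F a b" "x \<in> {a<..<b}" for a b x
  proof -
    have "x \<notin> F"
      using that unfolding adjacent_in_def by blast
    with gap have "a = Max {z\<in>F. z < x} \<and> b = Min {z\<in>F. x < z}"
      using adjacent_in_unique[OF that(1) _ that(2)] by blast
    with \<open>x \<notin> F\<close> show ?thesis
      by (simp add: S_def)
  qed
  have "step_function S"
    by (rule step_functionI_finite[OF F bounds]) (use on_gap in blast)
  moreover have "dist (S x) (f x) < e" for x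
    using gap[of x] c \<open>e > 0\<close> by (cases "x \<in> F") (auto simp: S_def dist_commute)
  ultimately show ?thesis
    by blast
qed

lemma regulated_left_approx:
  fixes G :: "'a::linorder_topology \<Rightarrow> real"
  assumes "regulated G" "e > 0" "y < x"
  shows "\<exists>l<x. \<exists>L. \<forall>z\<in>{l<..<x}. dist (G z) L < e"
proof (cases "left_dense x")
  case True
  then obtain L where "(G \<longlongrightarrow> L) (at_left x)"
    using assms(1) unfolding regulated_def by blast
  then have "\<forall>\<^sub>F z in at_left x. dist (G z) L < e"
    using assms(2) by (rule tendstoD)
  then show ?thesis
    unfolding eventually_at_left[OF assms(3)] by force
next
  case False
  then obtain l where "l < x" "\<forall>z. \<not> (l < z \<and> z < x)"
    using assms(3) unfolding left_dense_def by blast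
  then show ?thesis
    by (meson greaterThanLessThan_iff)
qed

lemma regulated_right_approx:
  fixes G :: "'a::linorder_topology \<Rightarrow> real"
  assumes "regulated G" "e > 0" "x < y"
  shows "\<exists>r>x. \<forall>z\<in>{x<..<r}. dist (G z) (G x) < e"
proof (cases "right_dense x")
  case True
  then have "(G \<longlongrightarrow> G x) (at_right x)"
    using assms(1) unfolding regulated_def by blast
  then have "\<forall>\<^sub>F z in at_right x. dist (G z) (G x) < e"
    using assms(2) by (rule tendstoD)
  then show ?thesis
    unfolding eventually_at_right[OF assms(3)] by force
next
  case False
  then obtain r where "x < r" "\<forall>z. \<not> (x < z \<and> z < r)"
    using assms(3) unfolding right_dense_def by blast
  then show ?thesis
    by (meson greaterThanLessThan_iff)
qed

lemma regulated_finite_partition: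
  fixes G :: "'a::linorder_topology \<Rightarrow> real"
  assumes "compact (UNIV :: 'a set)" "regulated G" "e > 0"
    and bot: "\<And>x. m \<le> x" and top: "\<And>x. x \<le> M"
  shows "\<exists>F. finite F \<and> m \<in> F \<and> M \<in> F \<and>
           (\<forall>a b. adjacent_in F a b \<longrightarrow> (\<exists>c. \<forall>z\<in>{a<..<b}. dist (G z) c < e))"
proof -
  have "\<exists>l L. x \<noteq> m \<longrightarrow> l < x \<and> (\<forall>z\<in>{l<..<x}. dist (G z) L < e)" for x
    using regulated_left_approx[OF assms(2,3), of m x] bot[of x] by (auto simp: le_neq_trans)
  then obtain l L where left: "\<And>x. x \<noteq> m \<Longrightarrow> l x < x \<and> (\<forall>z\<in>{l x<..<x}. dist (G z) (L x) < e)"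
    by metis
  have "\<exists>r. x \<noteq> M \<longrightarrow> x < r \<and> (\<forall>z\<in>{x<..<r}. dist (G z) (G x) < e)" for x
    using regulated_right_approx[OF assms(2,3), of x M] top[of x] by (auto simp: le_neq_trans)
  then obtain r where right: "\<And>x. x \<noteq> M \<Longrightarrow> x < r x \<and> (\<forall>z\<in>{x<..<r x}. dist (G z) (G x) < e)"
    by metis
  define U where "U x = (if x = m then UNIV else {l x<..}) \<inter> (if x = M then UNIV else {..<r x})" for x
  obtain C where "C \<subseteq> UNIV" "finite C" and cover: "UNIV \<subseteq> (\<Union>x\<in>C. U x)"
  proof (rule compactE_image[OF assms(1), of UNIV U])
    show "open (U x)" for x
      unfolding U_def by auto
    have "x \<in> U x" for x
      using left[of x] right[of x] unfolding U_def by auto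
    then show "UNIV \<subseteq> (\<Union>x\<in>UNIV. U x)"
      by blast
  qed
  \<comment> \<open>\<open>l m\<close> and \<open>r M\<close> are unspecified, but extra points in \<open>F\<close> do no harm.\<close>
  define F where "F = {m, M} \<union> C \<union> l ` C \<union> r ` C"
  have "\<exists>c. \<forall>z\<in>{a<..<b}. dist (G z) c < e" if gap: "adjacent_in F a b" for a b
  proof (cases "{a<..<b} = {}")
    case False
    then obtain y where y: "y \<in> {a<..<b}"
      by blast
    with cover obtain x where "x \<in> C" "y \<in> U x"
      by blast
    then have F_points: "x \<in> F" "l x \<in> F" "r x \<in> F"
      unfolding F_def by auto
    then have "y \<noteq> x"
      using gap y unfolding adjacent_in_def by blast
    then consider "y < x" | "x < y"
      by (rule linorder_neqE)
    then show ?thesis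
    proof cases
      case 1
      then have "x \<noteq> m"
        using bot[of y] by auto
      with \<open>y \<in> U x\<close> have "l x < y"
        unfolding U_def by auto
      then have "l x \<le> a \<and> b \<le> x"
        using adjacent_in_between[OF gap y] F_points 1 by blast
      then have "{a<..<b} \<subseteq> {l x<..<x}"
        by (auto intro: order.strict_trans1 order.strict_trans2)
      then show ?thesis
        using left[OF \<open>x \<noteq> m\<close>] by blast
    next
      case 2
      then have "x \<noteq> M"
        using top[of y] by auto
      with \<open>y \<in> U x\<close> have "y < r x"
        unfolding U_def by auto
      then have "x \<le> a \<and> b \<le> r x"
        using adjacent_in_between[OF gap y] F_points 2 by blast
      then have "{a<..<b} \<subseteq> {x<..<r x}"
        by (auto intro: order.strict_trans1 order.strict_trans2)
      then show ?thesis
        using right[OF \<open>x \<noteq> M\<close>] by blast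
    qed
  qed simp
  moreover have "finite F" "m \<in> F" "M \<in> F"
    using \<open>finite C\<close> unfolding F_def by simp_all
  ultimately show ?thesis
    by blast
qed

lemma regulated_step_approx:
  fixes G :: "'a::linorder_topology \<Rightarrow> real"
  assumes "compact (UNIV :: 'a set)" "regulated G" "e > 0"
  shows "\<exists>S. step_function S \<and> (\<forall>x. dist (S x) (G x) < e)"
proof -
  obtain m M :: 'a where bounds: "\<And>x. m \<le> x" "\<And>x. x \<le> M"
    using compact_attains_inf[OF assms(1)] compact_attains_sup[OF assms(1)] by auto
  obtain F where F: "finite F" "m \<in> F" "M \<in> F"
    and near: "\<forall>a b. adjacent_in F a b \<longrightarrow> (\<exists>c. \<forall>z\<in>{a<..<b}. dist (G z) c < e)"
    using regulated_finite_partition[OF assms bounds] by blast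
  show ?thesis
    by (rule step_function_approx_gaps[OF F bounds assms(3)]) (use near in blast)
qed

lemma step_points_cover:
  fixes s :: "nat \<Rightarrow> 'a::linorder"
  assumes "s 0 \<le> x" "x \<le> s n"
  shows "x \<in> s ` {..n} \<or> (\<exists>k<n. x \<in> {s k<..<s (Suc k)})"
  using assms(2)
proof (induction n)
  case 0
  then show ?case
    using assms(1) by auto
next
  case (Suc n)
  show ?case
  proof (cases "x \<le> s n")
    case True
    then show ?thesis
      using Suc.IH by (auto intro: less_SucI)
  next
    case False
    then show ?thesis
      using Suc.prems by (auto simp: order.order_iff_strict)
  qed
qed

lemma step_function_borel_measurable:
  fixes S :: "'a::linorder_topology \<Rightarrow> real"
  assumes "step_function S"
  shows "S \<in> borel_measurable borel"
proof (rule borel_measurableI)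
  obtain s :: "nat \<Rightarrow> 'a" and n c where first: "\<And>x. s 0 \<le> x" and last: "\<And>x. x \<le> s n"
    and const: "\<And>k x. k < n \<Longrightarrow> x \<in> {s k<..<s (Suc k)} \<Longrightarrow> S x = c k"
    using assms unfolding step_function_def greaterThanLessThan_iff by metis
  fix T :: "real set"
  assume "open T"
  have preimage: "S -` T = (S -` T \<inter> s ` {..n}) \<union> (\<Union>k\<in>{k. k < n \<and> c k \<in> T}. {s k<..<s (Suc k)})"
    (is "_ = ?points \<union> ?gaps")
  proof
    show "S -` T \<subseteq> ?points \<union> ?gaps"
    proof
      fix x
      assume "x \<in> S -` T"
      with step_points_cover[OF first last, of x] const[of _ x] show "x \<in> ?points \<union> ?gaps"
        by auto
    qed
    show "?points \<union> ?gaps \<subseteq> S -` T"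
      using const by auto
  qed
  have "S -` T \<inter> s ` {..n} \<in> sets borel"
    by (intro borel_closed finite_imp_closed) auto
  moreover have "(\<Union>k\<in>{k. k < n \<and> c k \<in> T}. {s k<..<s (Suc k)}) \<in> sets borel"
    by (intro borel_open) auto
  ultimately show "S -` T \<inter> space borel \<in> sets borel"
    unfolding space_borel Int_UNIV_right by (subst preimage) (rule sets.Un)
qed

lemma uniform_limit_dist_bound:
  assumes "\<And>n x. x \<in> A \<Longrightarrow> dist (f n x) (g x) \<le> d n" and "d \<longlonglongrightarrow> 0"
  shows "uniform_limit A f g sequentially"
proof (rule uniform_limitI)
  fix e :: real
  assume "e > 0"
  with assms(2) have "\<forall>\<^sub>F n in sequentially. d n < e"
    by (rule order_tendstoD(2))
  then show "\<forall>\<^sub>F n in sequentially. \<forall>x\<in>A. dist (f n x) (g x) < e"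
    by eventually_elim (use assms(1) in \<open>blast intro: le_less_trans\<close>)
qed

theorem lemma4p2:
  fixes G :: "'a::linorder_topology \<Rightarrow> real"
  assumes "compact (UNIV :: 'a set)"
    and "\<exists>a b :: 'a. a < b"
    and "regulated G"
  shows "(\<exists>S :: nat \<Rightarrow> 'a \<Rightarrow> real. (\<forall>n. step_function (S n)) \<and>
            uniform_limit UNIV S G sequentially)
         \<and> G \<in> borel_measurable borel"
proof -
  have "\<exists>S. step_function S \<and> (\<forall>x. dist (S x) (G x) < inverse (real (Suc n)))" for n
    using regulated_step_approx[OF assms(1,3)] by simp
  then obtain S where step: "\<And>n. step_function (S n)"
    and close: "\<And>n x. dist (S n x) (G x) < inverse (real (Suc n))"
    by metis
  have lim: "uniform_limit UNIV S G sequentially"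
    using close LIMSEQ_inverse_real_of_nat by (intro uniform_limit_dist_bound) (auto intro: less_imp_le)
  have "G \<in> borel_measurable borel"
    using step_function_borel_measurable[OF step] tendsto_uniform_limitI[OF lim]
    by (rule borel_measurable_LIMSEQ_metric) simp
  with step lim show ?thesis
    by blast
qed

end
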